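(* Let $N\ge 1$, let $0\le \epsilon<1/2$, and let $H_N=\sum_{k=1}^N \frac1k$. Let $S\subseteq\{0,1\}^N$ be the set of non-decreasing bit strings $x=(x_0,\dots,x_{N-1})$ (i.e. $x_0\le x_1\le\dots\le x_{N-1}$) with $x_{N-1}=1$, and let $f(x)=\min\{0\le i<N : x_i=1\}$ (the ordered searching problem). Then every quantum query algorithm (in the model described in the context) that computes $f$ on $S$ with error probability at most $\epsilon$ uses at least $$\Big(1-2\sqrt{\epsilon(1-\epsilon)}\Big)\frac{1}{\pi}(H_N-1)$$ queries. In particular, every exact quantum algorithm ($\epsilon=0$) for this problem uses more than $\frac1\pi(\ln(N)-1)$ queries.
   Context: Quantum query model: the algorithm acts on a Hilbert space with orthonormal basis $\{|z;i\rangle : z,i \text{ non-negative integers}\}$. For an input $x\in\{0,1\}^N$ the oracle is the unitary $O_x|z;i\rangle=(-1)^{x_i}|z;i\rangle$ if $0\le i<N$ and $O_x|z;i\rangle=|z;i\rangle$ if $i\ge N$. A quantum algorithm with $T$ queries is a unitary of the form $(U O_x)^T U$ for a fixed unitary $U$ (independent of $x$), applied to the initial state $|0\rangle$; the final state is measured in the computational basis and a designated output register is read. The algorithm computes $f:S\to\{0,1\}^m$ with error probability at most $\epsilon$ if for every $x\in S$ the output read equals $f(x)$ with probability at least $1-\epsilon$; it is exact if $\epsilon=0$. *)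

theory Defs
  imports "HOL-Analysis.Analysis"
begin

text \<open>States: functions from basis labels (z,i) to complex amplitudes, square-summable.\<close>
type_synonym qstate = "nat \<times> nat \<Rightarrow> complex"

definition l2 :: "qstate set" where
  "l2 = {\<psi>. (\<lambda>b. (cmod (\<psi> b))\<^sup>2) summable_on UNIV}"

definition l2norm :: "qstate \<Rightarrow> real" where
  "l2norm \<psi> = sqrt (infsum (\<lambda>b. (cmod (\<psi> b))\<^sup>2) UNIV)"

definition is_unitary :: "(qstate \<Rightarrow> qstate) \<Rightarrow> bool" where
  "is_unitary U \<longleftrightarrow>
     U ` l2 = l2 \<and>
     (\<forall>\<psi>\<in>l2. \<forall>\<phi>\<in>l2. \<forall>a b. U (\<lambda>k. a * \<psi> k + b * \<phi> k) = (\<lambda>k. a * U \<psi> k + b * U \<phi> k)) \<and>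
     (\<forall>\<psi>\<in>l2. l2norm (U \<psi>) = l2norm \<psi>)"

text \<open>The phase query operator O_x; the bit string x is given by x i for i < N (x i = True means x_i = 1).\<close>
definition query_op :: "nat \<Rightarrow> (nat \<Rightarrow> bool) \<Rightarrow> qstate \<Rightarrow> qstate" where
  "query_op N x \<psi> = (\<lambda>(z, i). (if i < N \<and> x i then -1 else 1) * \<psi> (z, i))"

definition init_state :: qstate where
  "init_state = (\<lambda>b. if b = (0, 0) then 1 else 0)"

definition final_state :: "(qstate \<Rightarrow> qstate) \<Rightarrow> nat \<Rightarrow> nat \<Rightarrow> (nat \<Rightarrow> bool) \<Rightarrow> qstate" where
  "final_state U T N x = ((\<lambda>\<psi>. U (query_op N x \<psi>)) ^^ T) (U init_state)"

definition output_prob :: "(qstate \<Rightarrow> qstate) \<Rightarrow> (nat \<times> nat \<Rightarrow> nat) \<Rightarrow> nat \<Rightarrow> nat \<Rightarrow> (nat \<Rightarrow> bool) \<Rightarrow> nat \<Rightarrow> real" where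
  "output_prob U out T N x v = infsum (\<lambda>b. (cmod (final_state U T N x b))\<^sup>2) {b. out b = v}"

definition ordered_inputs :: "nat \<Rightarrow> (nat \<Rightarrow> bool) set" where
  "ordered_inputs N = {x. (\<forall>i j. i \<le> j \<and> j < N \<and> x i \<longrightarrow> x j) \<and> x (N - 1)}"

definition ordered_search :: "nat \<Rightarrow> (nat \<Rightarrow> bool) \<Rightarrow> nat" where
  "ordered_search N x = (LEAST i. i < N \<and> x i)"

end

theory Submission
  imports Defs
begin

(* Adversary argument of Hoyer, Neerbek and Shi. Run the algorithm on the N step inputs
   x_k = [i <= k] (i < N), whose answers are pairwise distinct, and follow the weighted overlap
   W_t = sum_{i<j} Re <psi_i(t), psi_j(t)> / (j - i) of the states after t queries. All states
   start equal, so W_0 = sum_{i<j} 1 / (j - i) = N (H_N - 1). A query negates the overlap of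
   psi_i and psi_j exactly on the basis states (z, k) with i <= k < j, so by the Hilbert-type
   inequality sum_{i <= k < j} 2 a_i a_j / (j - i) <= pi sum_i a_i^2 one query changes W by at
   most pi N. At the end the states of distinct inputs are concentrated on disjoint sets of
   outcomes, hence |Re <psi_i, psi_j>| <= 2 sqrt (eps (1 - eps)) and
   W_T <= 2 sqrt (eps (1 - eps)) W_0. Together, T pi N >= (1 - 2 sqrt (eps (1 - eps))) W_0. *)

lemma two_mult_le_scaled_squares:
  fixes t u v :: real
  assumes "t > 0"
  shows "2 * u * v \<le> t * u\<^sup>2 + v\<^sup>2 / t"
proof -
  have "0 \<le> (t * u - v)\<^sup>2 / t" using assms by simp
  then show ?thesis using assms by (simp add: field_simps power2_eq_square)
qed

lemma has_sum_abs_le: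
  fixes f g :: "'a \<Rightarrow> real"
  assumes "(f has_sum a) A" "(g has_sum c) A" "\<And>x. x \<in> A \<Longrightarrow> \<bar>f x\<bar> \<le> g x"
  shows "\<bar>a\<bar> \<le> c"
proof -
  have "a \<le> c"
    by (rule has_sum_mono[OF assms(1,2)]) (meson abs_le_D1 assms(3))
  moreover have "((\<lambda>x. - f x) has_sum - a) A"
    using assms(1) by (simp add: has_sum_uminus)
  then have "- a \<le> c"
    by (rule has_sum_mono[OF _ assms(2)]) (meson abs_le_D2 assms(3))
  ultimately show ?thesis by simp
qed

lemma has_sum_sum:
  fixes f :: "'i \<Rightarrow> 'a \<Rightarrow> 'b::topological_comm_monoid_add"
  assumes "finite I" "\<And>i. i \<in> I \<Longrightarrow> (f i has_sum s i) A"
  shows "((\<lambda>x. \<Sum>i\<in>I. f i x) has_sum (\<Sum>i\<in>I. s i)) A"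
  using assms by (induction I rule: finite_induct) (auto intro: has_sum_add)

lemma has_sum_diff:
  fixes f g :: "'a \<Rightarrow> 'b::{topological_ab_group_add}"
  assumes "(f has_sum a) A" "(g has_sum c) A"
  shows "((\<lambda>x. f x - g x) has_sum a - c) A"
  using has_sum_add[OF assms(1) has_sum_uminus[THEN iffD2, of g A "- c"]] assms(2) by simp

lemma has_sum_divide_const:
  fixes f :: "'a \<Rightarrow> 'b::{real_normed_field}"
  assumes "(f has_sum a) A"
  shows "((\<lambda>x. f x / c) has_sum a / c) A"
  using has_sum_cmult_left[OF assms, of "inverse c"] by (simp add: divide_inverse)

section \<open>A Hilbert-type inequality\<close>

lemma convex_midpoint_le_antiderivative_diff:
  fixes f F :: "real \<Rightarrow> real"
  assumes "0 < h"
    and convex: "convex_on {a - h<..<a + h} f"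
    and deriv: "\<And>x. x \<in> {a - h<..<a + h} \<Longrightarrow> (F has_real_derivative f x) (at x)"
    and cont: "continuous_on {a - h..a + h} F"
  shows "2 * h * f a \<le> F (a + h) - F (a - h)"
proof -
  define G where "G u = F (a + u) - F (a - u) - 2 * u * f a" for u
  have "G 0 \<le> G h"
  proof (rule DERIV_nonneg_imp_increasing_open[of 0 h G])
    fix u assume u: "0 < u" "u < h"
    have "((\<lambda>u. F (a + u)) has_real_derivative f (a + u) * 1) (at u)"
      by (rule DERIV_chain2[OF deriv]) (use u in \<open>auto intro!: derivative_eq_intros\<close>)
    moreover have "((\<lambda>u. F (a - u)) has_real_derivative f (a - u) * -1) (at u)"
      by (rule DERIV_chain2[OF deriv]) (use u in \<open>auto intro!: derivative_eq_intros\<close>)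
    ultimately have "(G has_real_derivative f (a + u) + f (a - u) - 2 * f a) (at u)"
      unfolding G_def by (auto intro!: derivative_eq_intros)
    moreover have "f a \<le> (1 - 1/2) * f (a + u) + 1/2 * f (a - u)"
      using convex_onD[OF convex, of "1/2" "a + u" "a - u"] u by (simp add: field_simps)
    ultimately show "\<exists>y. (G has_real_derivative y) (at u) \<and> 0 \<le> y"
      by (intro exI[of _ "f (a + u) + f (a - u) - 2 * f a"]) auto
  next
    show "continuous_on {0..h} G"
      unfolding G_def
      by (intro continuous_intros continuous_on_compose2[OF cont]) auto
  qed (use \<open>0 < h\<close> in simp)
  then show ?thesis
    unfolding G_def by simp
qed

lemma has_real_derivative_hilbert_kernel:
  assumes "c > 0" "x > 0"
  shows "((\<lambda>x. 1 / ((c + x) * sqrt x)) has_real_derivative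
           - (1 / ((c + x)\<^sup>2 * sqrt x) + 1 / (2 * (c + x) * x * sqrt x))) (at x)"
proof -
  have "c + x > 0" using assms by auto
  then show ?thesis
    using assms
    by (auto intro!: derivative_eq_intros simp: divide_simps power2_eq_square)
      (simp flip: mult.assoc, simp add: algebra_simps)
qed

lemma convex_on_hilbert_kernel:
  assumes "c > 0"
  shows "convex_on {0<..} (\<lambda>x. 1 / ((c + x) * sqrt x))"
proof (rule convex_on_realI[OF _ has_real_derivative_hilbert_kernel[OF assms]])
  fix x y :: real assume "x \<in> {0<..}" "y \<in> {0<..}" "x \<le> y"
  then have "1 / ((c + y)\<^sup>2 * sqrt y) \<le> 1 / ((c + x)\<^sup>2 * sqrt x)"
    and "1 / (2 * (c + y) * y * sqrt y) \<le> 1 / (2 * (c + x) * x * sqrt x)"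
    using assms by (auto intro!: divide_left_mono mult_mono power_mono mult_pos_pos)
  then show "- (1 / ((c + x)\<^sup>2 * sqrt x) + 1 / (2 * (c + x) * x * sqrt x))
      \<le> - (1 / ((c + y)\<^sup>2 * sqrt y) + 1 / (2 * (c + y) * y * sqrt y))"
    by linarith
qed auto

lemma has_real_derivative_arctan_antiderivative:
  assumes "c > 0" "x > 0"
  shows "((\<lambda>x. 2 / sqrt c * arctan (sqrt x / sqrt c)) has_real_derivative 1 / ((c + x) * sqrt x)) (at x)"
proof -
  have "1 + (sqrt x / sqrt c)\<^sup>2 = (c + x) / c"
    using assms by (simp add: field_simps)
  moreover have "c + x > 0" using assms by simp
  ultimately show ?thesis
    using assms by (auto intro!: derivative_eq_intros simp: divide_simps)
qed

(* By convexity each term is at most the integral of the kernel over [m, m + 1], and the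
   integral over (0, infinity) is pi / sqrt c. *)
lemma sum_hilbert_kernel_le_pi:
  assumes "c > 0"
  shows "(\<Sum>m<M. sqrt c / ((c + (real m + 1/2)) * sqrt (real m + 1/2))) \<le> pi"
proof -
  define f where "f x = 1 / ((c + x) * sqrt x)" for x
  define F where "F x = 2 / sqrt c * arctan (sqrt x / sqrt c)" for x
  have "f (real m + 1/2) \<le> F (real (Suc m)) - F (real m)" for m
  proof -
    have "2 * (1/2) * f (real m + 1/2) \<le> F (real m + 1/2 + 1/2) - F (real m + 1/2 - 1/2)"
    proof (rule convex_midpoint_le_antiderivative_diff)
      show "convex_on {real m + 1/2 - 1/2<..<real m + 1/2 + 1/2} f"
        unfolding f_def by (rule convex_on_subset[OF convex_on_hilbert_kernel[OF assms]]) auto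
      show "(F has_real_derivative f x) (at x)" if "x \<in> {real m + 1/2 - 1/2<..<real m + 1/2 + 1/2}" for x
        unfolding F_def f_def using that by (intro has_real_derivative_arctan_antiderivative assms) auto
      show "continuous_on {real m + 1/2 - 1/2..real m + 1/2 + 1/2} F"
        unfolding F_def by (intro continuous_intros) (use assms in auto)
    qed simp
    then show ?thesis by (simp add: add.commute)
  qed
  then have "(\<Sum>m<M. f (real m + 1/2)) \<le> (\<Sum>m<M. F (real (Suc m)) - F (real m))"
    by (rule sum_mono)
  also have "\<dots> = F (real M)"
    using sum_lessThan_telescope[of "\<lambda>m. F (real m)" M] by (simp add: F_def)
  also have "\<dots> \<le> 2 / sqrt c * (pi / 2)"
    unfolding F_def using assms arctan_ubound less_imp_le by (intro mult_left_mono) auto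
  finally have "sqrt c * (\<Sum>m<M. f (real m + 1/2)) \<le> sqrt c * (2 / sqrt c * (pi / 2))"
    using assms by (intro mult_left_mono) auto
  then show ?thesis
    using assms by (simp add: f_def sum_distrib_left)
qed

lemma hilbert_block_le:
  fixes x :: "nat \<Rightarrow> real"
  shows "(\<Sum>i\<le>k. \<Sum>j\<in>{k<..<N}. 2 * x i * x j / (real j - real i)) \<le> pi * (\<Sum>i<N. (x i)\<^sup>2)"
proof (cases "k < N")
  case False
  then show ?thesis by (simp add: sum_nonneg)
next
  case True
  define A where "A i = real k - real i + 1/2" for i
  define B where "B j = real j - real k - 1/2" for j
  \<comment> \<open>Schur test: with these weights every row and column sum of the kernel is bounded by
    \<open>sum_hilbert_kernel_le_pi\<close>.\<close>
  define r where "r i j = sqrt (A i) / sqrt (B j)" for i j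
  have A: "A i > 0" if "i \<le> k" for i using that by (simp add: A_def)
  have B: "B j > 0" if "j \<in> {k<..<N}" for j using that by (simp add: B_def)
  have row: "(\<Sum>j\<in>{k<..<N}. r i j / (A i + B j)) \<le> pi" if "i \<le> k" for i
  proof -
    have "(\<Sum>j\<in>{k<..<N}. r i j / (A i + B j))
        = (\<Sum>m<N - Suc k. sqrt (A i) / ((A i + (real m + 1/2)) * sqrt (real m + 1/2)))"
      by (rule sum.reindex_bij_witness[where i = "\<lambda>m. m + Suc k" and j = "\<lambda>j. j - Suc k"])
        (auto simp: r_def B_def algebra_simps)
    also have "\<dots> \<le> pi" using A[OF that] by (rule sum_hilbert_kernel_le_pi)
    finally show ?thesis .
  qed
  have column: "(\<Sum>i\<le>k. (1 / r i j) / (A i + B j)) \<le> pi" if "j \<in> {k<..<N}" for j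
  proof -
    have "(\<Sum>i\<le>k. (1 / r i j) / (A i + B j))
        = (\<Sum>m<Suc k. sqrt (B j) / ((B j + (real m + 1/2)) * sqrt (real m + 1/2)))"
      by (rule sum.reindex_bij_witness[where i = "\<lambda>m. k - m" and j = "\<lambda>i. k - i"])
        (auto simp: r_def A_def algebra_simps)
    also have "\<dots> \<le> pi" using B[OF that] by (rule sum_hilbert_kernel_le_pi)
    finally show ?thesis .
  qed
  have "(\<Sum>i\<le>k. \<Sum>j\<in>{k<..<N}. 2 * x i * x j / (real j - real i))
      \<le> (\<Sum>i\<le>k. \<Sum>j\<in>{k<..<N}. (r i j * (x i)\<^sup>2 + (x j)\<^sup>2 / r i j) / (A i + B j))"
  proof (intro sum_mono)
    fix i j assume "i \<in> {..k}" "j \<in> {k<..<N}"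
    then have "r i j > 0" "A i + B j > 0" and "real j - real i = A i + B j"
      using A B by (auto simp: r_def A_def B_def)
    moreover note two_mult_le_scaled_squares[of "r i j" "x i" "x j"]
    ultimately show "2 * x i * x j / (real j - real i) \<le> (r i j * (x i)\<^sup>2 + (x j)\<^sup>2 / r i j) / (A i + B j)"
      by (simp add: divide_right_mono)
  qed
  also have "\<dots> = (\<Sum>i\<le>k. (x i)\<^sup>2 * (\<Sum>j\<in>{k<..<N}. r i j / (A i + B j)))
      + (\<Sum>j\<in>{k<..<N}. (x j)\<^sup>2 * (\<Sum>i\<le>k. (1 / r i j) / (A i + B j)))"
    by (simp add: add_divide_distrib sum.distrib sum_distrib_left sum.swap[of _ "{..k}"] algebra_simps)
  also have "\<dots> \<le> (\<Sum>i\<le>k. (x i)\<^sup>2 * pi) + (\<Sum>j\<in>{k<..<N}. (x j)\<^sup>2 * pi)"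
    using row column by (intro add_mono sum_mono mult_left_mono) auto
  also have "\<dots> = pi * (\<Sum>i<N. (x i)\<^sup>2)"
  proof -
    have "{..<N} = {..k} \<union> {k<..<N}" using True by auto
    then show ?thesis
      by (simp add: sum.union_disjoint ivl_disj_int sum_distrib_left algebra_simps)
  qed
  finally show ?thesis .
qed

lemma sum_straddling_pairs:
  fixes F :: "nat \<Rightarrow> nat \<Rightarrow> 'a::comm_monoid_add"
  shows "(\<Sum>i<N. \<Sum>j\<in>{i<..<N}. if i \<le> k \<and> k < j then F i j else 0) = (\<Sum>i\<le>k. \<Sum>j\<in>{k<..<N}. F i j)"
proof -
  have "(\<Sum>i<N. \<Sum>j\<in>{i<..<N}. if i \<le> k \<and> k < j then F i j else 0)
      = (\<Sum>i<N. if i \<le> k then \<Sum>j\<in>{k<..<N}. F i j else 0)"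
  proof (rule sum.cong[OF refl])
    fix i
    have "{j \<in> {i<..<N}. i \<le> k \<and> k < j} = (if i \<le> k then {k<..<N} else {})" by auto
    then show "(\<Sum>j\<in>{i<..<N}. if i \<le> k \<and> k < j then F i j else 0) = (if i \<le> k then \<Sum>j\<in>{k<..<N}. F i j else 0)"
      by (simp add: sum.inter_filter[symmetric])
  qed
  also have "\<dots> = (\<Sum>i\<le>k. \<Sum>j\<in>{k<..<N}. F i j)"
  proof (cases "k < N")
    case True
    then have "{i \<in> {..<N}. i \<le> k} = {..k}" by auto
    then show ?thesis by (simp add: sum.inter_filter[symmetric])
  qed simp
  finally show ?thesis .
qed

lemma sum_inverse_differences:
  "(\<Sum>i<N. \<Sum>j\<in>{i<..<N}. 1 / (real j - real i)) = real N * (\<Sum>k=1..N. 1 / real k) - real N"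
proof (induction N)
  case (Suc N)
  have "(\<Sum>i<N. 1 / (real N - real i)) = (\<Sum>k=1..N. 1 / real k)"
    by (rule sum.reindex_bij_witness[where i = "\<lambda>k. N - k" and j = "\<lambda>i. N - i"]) auto
  moreover have "{i<..<Suc N} = insert N {i<..<N}" if "i < N" for i
    using that by auto
  moreover have "{N<..<Suc N} = {}"
    by auto
  ultimately have "(\<Sum>i<Suc N. \<Sum>j\<in>{i<..<Suc N}. 1 / (real j - real i))
      = (\<Sum>i<N. \<Sum>j\<in>{i<..<N}. 1 / (real j - real i)) + (\<Sum>k=1..N. 1 / real k)"
    by (simp add: sum.distrib)
  then show ?case
    using Suc by (simp add: algebra_simps)
qed simp

section \<open>Mass and real inner product of states\<close>

definition mass :: "qstate \<Rightarrow> (nat \<times> nat) set \<Rightarrow> real" where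
  "mass \<psi> X = infsum (\<lambda>b. (cmod (\<psi> b))\<^sup>2) X"

definition inner_re :: "qstate \<Rightarrow> qstate \<Rightarrow> real" where
  "inner_re \<psi> \<phi> = infsum (\<lambda>b. Re (cnj (\<psi> b) * \<phi> b)) UNIV"

lemma l2_summable_on: "\<psi> \<in> l2 \<Longrightarrow> (\<lambda>b. (cmod (\<psi> b))\<^sup>2) summable_on X"
  unfolding l2_def by (auto intro: summable_on_subset_banach)

lemma power2_l2norm: "(l2norm \<psi>)\<^sup>2 = mass \<psi> UNIV"
  unfolding l2norm_def mass_def by (simp add: infsum_nonneg)

lemma has_sum_mass: "\<psi> \<in> l2 \<Longrightarrow> ((\<lambda>b. (cmod (\<psi> b))\<^sup>2) has_sum mass \<psi> X) X"
  unfolding mass_def by (intro has_sum_infsum l2_summable_on)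

lemma summable_on_cmod_mult:
  assumes "\<psi> \<in> l2" "\<phi> \<in> l2"
  shows "(\<lambda>b. cmod (\<psi> b) * cmod (\<phi> b)) summable_on X"
proof (rule summable_on_comparison_test)
  have "(\<lambda>b. ((cmod (\<psi> b))\<^sup>2 + (cmod (\<phi> b))\<^sup>2) * (1 / 2)) summable_on X"
    using assms by (intro summable_on_cmult_left summable_on_add l2_summable_on)
  then show "(\<lambda>b. ((cmod (\<psi> b))\<^sup>2 + (cmod (\<phi> b))\<^sup>2) / 2) summable_on X"
    by simp
  show "cmod (\<psi> b) * cmod (\<phi> b) \<le> ((cmod (\<psi> b))\<^sup>2 + (cmod (\<phi> b))\<^sup>2) / 2" for b
    using sum_squares_bound[of "cmod (\<psi> b)" "cmod (\<phi> b)"] by (simp add: power2_eq_square)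
  show "0 \<le> cmod (\<psi> b) * cmod (\<phi> b)" for b
    by simp
qed

lemma abs_Re_cnj_mult_le: "\<bar>Re (cnj a * b)\<bar> \<le> cmod a * cmod b"
  by (metis abs_Re_le_cmod complex_mod_cnj norm_mult)

lemma has_sum_inner_re:
  assumes "\<psi> \<in> l2" "\<phi> \<in> l2"
  shows "((\<lambda>b. Re (cnj (\<psi> b) * \<phi> b)) has_sum inner_re \<psi> \<phi>) UNIV"
proof -
  have "(\<lambda>b. norm (Re (cnj (\<psi> b) * \<phi> b))) summable_on UNIV"
    by (rule summable_on_comparison_test[OF summable_on_cmod_mult[OF assms]])
      (simp_all only: real_norm_def abs_Re_cnj_mult_le abs_ge_zero)
  then have "(\<lambda>b. Re (cnj (\<psi> b) * \<phi> b)) summable_on UNIV"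
    by (rule summable_on_iff_abs_summable_on_real[THEN iffD2])
  then show ?thesis
    unfolding inner_re_def by (rule has_sum_infsum)
qed

lemma abs_inner_re_le:
  assumes "\<psi> \<in> l2" "\<phi> \<in> l2"
  shows "\<bar>inner_re \<psi> \<phi>\<bar> \<le> infsum (\<lambda>b. cmod (\<psi> b) * cmod (\<phi> b)) UNIV"
  by (rule has_sum_abs_le[OF has_sum_inner_re[OF assms] has_sum_infsum[OF summable_on_cmod_mult[OF assms]]])
    (rule abs_Re_cnj_mult_le)

lemma inner_re_self: "inner_re \<psi> \<psi> = mass \<psi> UNIV"
proof -
  have "Re (cnj z * z) = (cmod z)\<^sup>2" for z
    by (subst cmod_power2) (simp add: power2_eq_square)
  then show ?thesis unfolding inner_re_def mass_def by simp
qed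

lemma has_sum_cmod_add_power2:
  assumes "\<psi> \<in> l2" "\<phi> \<in> l2"
  shows "((\<lambda>b. (cmod (\<psi> b + \<phi> b))\<^sup>2) has_sum mass \<psi> UNIV + mass \<phi> UNIV + 2 * inner_re \<psi> \<phi>) UNIV"
proof -
  have "(cmod (a + b))\<^sup>2 = (cmod a)\<^sup>2 + (cmod b)\<^sup>2 + 2 * Re (cnj a * b)" for a b
    by (simp only: cmod_power2) (simp add: power2_eq_square algebra_simps)
  then show ?thesis
    using assms by (simp only:) (intro has_sum_add has_sum_cmult_right has_sum_mass has_sum_inner_re)
qed

lemma l2_add: "\<psi> \<in> l2 \<Longrightarrow> \<phi> \<in> l2 \<Longrightarrow> (\<lambda>b. \<psi> b + \<phi> b) \<in> l2"
  unfolding l2_def using has_sum_cmod_add_power2 l2_def has_sum_imp_summable by blast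

lemma mass_add:
  "\<psi> \<in> l2 \<Longrightarrow> \<phi> \<in> l2 \<Longrightarrow>
    mass (\<lambda>b. \<psi> b + \<phi> b) UNIV = mass \<psi> UNIV + mass \<phi> UNIV + 2 * inner_re \<psi> \<phi>"
  unfolding mass_def[of "\<lambda>b. _ b + _ b"] by (rule infsumI[OF has_sum_cmod_add_power2])

lemma unitary_l2: "is_unitary U \<Longrightarrow> \<psi> \<in> l2 \<Longrightarrow> U \<psi> \<in> l2"
  unfolding is_unitary_def by blast

lemma unitary_mass: "is_unitary U \<Longrightarrow> \<psi> \<in> l2 \<Longrightarrow> mass (U \<psi>) UNIV = mass \<psi> UNIV"
  unfolding is_unitary_def by (simp flip: power2_l2norm)

lemma unitary_inner_re:
  assumes "is_unitary U" "\<psi> \<in> l2" "\<phi> \<in> l2"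
  shows "inner_re (U \<psi>) (U \<phi>) = inner_re \<psi> \<phi>"
proof -
  have "U (\<lambda>b. 1 * \<psi> b + 1 * \<phi> b) = (\<lambda>b. 1 * U \<psi> b + 1 * U \<phi> b)"
    using assms unfolding is_unitary_def by blast
  then have "mass (\<lambda>b. U \<psi> b + U \<phi> b) UNIV = mass (U (\<lambda>b. \<psi> b + \<phi> b)) UNIV"
    by simp
  also have "\<dots> = mass (\<lambda>b. \<psi> b + \<phi> b) UNIV"
    using assms by (intro unitary_mass l2_add)
  finally show ?thesis
    using assms by (simp add: mass_add unitary_l2 unitary_mass)
qed

lemma cmod_query_op: "cmod (query_op N x \<psi> b) = cmod (\<psi> b)"
  unfolding query_op_def by (cases b) (simp add: norm_mult)

lemma query_op_l2: "\<psi> \<in> l2 \<Longrightarrow> query_op N x \<psi> \<in> l2"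
  unfolding l2_def by (simp add: cmod_query_op)

lemma mass_query_op: "mass (query_op N x \<psi>) X = mass \<psi> X"
  unfolding mass_def by (simp add: cmod_query_op)

lemma has_sum_init_state: "((\<lambda>b. (cmod (init_state b))\<^sup>2) has_sum 1) UNIV"
proof -
  have "((\<lambda>b. (cmod (init_state b))\<^sup>2) has_sum 1) {(0, 0)}"
    by (rule has_sum_finiteI) (simp_all add: init_state_def)
  then show ?thesis
    by (subst has_sum_cong_neutral[where T = "{(0, 0)}"]) (auto simp: init_state_def)
qed

lemma init_state_l2: "init_state \<in> l2"
  unfolding l2_def using has_sum_init_state has_sum_imp_summable by blast

lemma mass_init_state: "mass init_state UNIV = 1"
  unfolding mass_def by (rule infsumI[OF has_sum_init_state])

lemma infsum_cmod_mult_le: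
  assumes "\<psi> \<in> l2" "\<phi> \<in> l2" "t > 0"
  shows "infsum (\<lambda>b. cmod (\<psi> b) * cmod (\<phi> b)) X \<le> (t * mass \<psi> X + mass \<phi> X / t) / 2"
proof -
  have "((\<lambda>b. (t * (cmod (\<psi> b))\<^sup>2 + (cmod (\<phi> b))\<^sup>2 * (1 / t)) * (1 / 2)) has_sum
      (t * mass \<psi> X + mass \<phi> X * (1 / t)) * (1 / 2)) X"
    using assms by (intro has_sum_cmult_left has_sum_cmult_right has_sum_add has_sum_mass)
  moreover have "cmod (\<psi> b) * cmod (\<phi> b) \<le> (t * (cmod (\<psi> b))\<^sup>2 + (cmod (\<phi> b))\<^sup>2 * (1 / t)) * (1 / 2)" for b
    using two_mult_le_scaled_squares[OF assms(3), of "cmod (\<psi> b)" "cmod (\<phi> b)"] by simp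
  ultimately have "infsum (\<lambda>b. cmod (\<psi> b) * cmod (\<phi> b)) X \<le> (t * mass \<psi> X + mass \<phi> X * (1 / t)) * (1 / 2)"
    by (intro has_sum_mono[OF has_sum_infsum[OF summable_on_cmod_mult[OF assms(1,2)]]])
  then show ?thesis by simp
qed

(* Weighted AM-GM, with weight t on A, where psi is concentrated, and weight 1 / t off A. *)
lemma abs_inner_re_le_of_concentrated_param:
  assumes l2: "\<psi> \<in> l2" "\<phi> \<in> l2" and unit: "mass \<psi> UNIV = 1" "mass \<phi> UNIV = 1"
    and disj: "A \<inter> B = {}" and conc: "mass \<psi> A \<ge> 1 - \<epsilon>" "mass \<phi> B \<ge> 1 - \<epsilon>"
    and t: "0 < t" "t \<le> 1"
  shows "\<bar>inner_re \<psi> \<phi>\<bar> \<le> \<epsilon> / t + t * (1 - \<epsilon>)"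
proof -
  have split: "mass \<theta> UNIV = mass \<theta> A + mass \<theta> (- A)" if "\<theta> \<in> l2" for \<theta>
    unfolding mass_def using that
    by (metis Compl_partition infsum_Un_disjoint l2_summable_on inf_compl_bot)
  have "mass \<phi> A + mass \<phi> B = mass \<phi> (A \<union> B)"
    unfolding mass_def using l2 disj by (intro infsum_Un_disjoint[symmetric] l2_summable_on)
  also have "\<dots> \<le> 1"
    unfolding unit(2)[symmetric] mass_def using l2 by (intro infsum_mono_neutral l2_summable_on) auto
  finally have "mass \<phi> A \<le> \<epsilon>" using conc(2) by linarith
  have "\<bar>inner_re \<psi> \<phi>\<bar> \<le> infsum (\<lambda>b. cmod (\<psi> b) * cmod (\<phi> b)) A + infsum (\<lambda>b. cmod (\<psi> b) * cmod (\<phi> b)) (- A)"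
    using abs_inner_re_le[OF l2] infsum_Un_disjoint[OF summable_on_cmod_mult[OF l2] summable_on_cmod_mult[OF l2], of A "- A"]
    by simp
  also have "\<dots> \<le> (t * mass \<psi> A + mass \<phi> A / t) / 2 + (mass \<psi> (- A) / t + mass \<phi> (- A) * t) / 2"
    using infsum_cmod_mult_le[OF l2, of t A] infsum_cmod_mult_le[OF l2, of "1 / t" "- A"] t
    by (intro add_mono) simp_all
  also have "\<dots> \<le> \<epsilon> / t + t * (1 - \<epsilon>)"
  proof -
    define s where "s = 1 / t"
    have "t \<le> s" using t by (simp add: s_def field_simps power2_eq_square mult_le_one)
    then have "(1 - \<epsilon>) * (s - t) \<le> mass \<psi> A * (s - t)"
      and "mass \<phi> A * (s - t) \<le> \<epsilon> * (s - t)"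
      using conc(1) \<open>mass \<phi> A \<le> \<epsilon>\<close> by (auto intro: mult_right_mono)
    moreover have compl: "mass \<psi> (- A) = 1 - mass \<psi> A" "mass \<phi> (- A) = 1 - mass \<phi> A"
      using split l2 unit by auto
    moreover have div: "x / t = x * s" for x
      by (simp add: s_def)
    ultimately show ?thesis
      unfolding div compl by (simp add: field_simps)
  qed
  finally show ?thesis .
qed

lemma abs_inner_re_le_of_concentrated:
  assumes l2: "\<psi> \<in> l2" "\<phi> \<in> l2" and unit: "mass \<psi> UNIV = 1" "mass \<phi> UNIV = 1"
    and disj: "A \<inter> B = {}" and conc: "mass \<psi> A \<ge> 1 - \<epsilon>" "mass \<phi> B \<ge> 1 - \<epsilon>"
    and \<epsilon>: "0 \<le> \<epsilon>" "\<epsilon> \<le> 1/2"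
  shows "\<bar>inner_re \<psi> \<phi>\<bar> \<le> 2 * sqrt (\<epsilon> * (1 - \<epsilon>))"
proof (cases "\<epsilon> = 0")
  case True
  have "\<bar>inner_re \<psi> \<phi>\<bar> \<le> 0"
  proof (rule field_le_epsilon)
    fix e :: real assume "0 < e"
    then have "\<bar>inner_re \<psi> \<phi>\<bar> \<le> \<epsilon> / min e 1 + min e 1 * (1 - \<epsilon>)"
      by (intro abs_inner_re_le_of_concentrated_param[OF l2 unit disj conc]) auto
    then show "\<bar>inner_re \<psi> \<phi>\<bar> \<le> 0 + e"
      using True min.cobounded1[of e 1] by simp
  qed
  then show ?thesis
    using True by simp
next
  case False
  define u where "u = sqrt \<epsilon>"
  define v where "v = sqrt (1 - \<epsilon>)"
  have uv: "0 < u" "u \<le> v" "u\<^sup>2 = \<epsilon>" "v\<^sup>2 = 1 - \<epsilon>"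
    using False \<epsilon> by (auto simp: u_def v_def)
  then have "0 < u / v" "u / v \<le> 1"
    by auto
  then have "\<bar>inner_re \<psi> \<phi>\<bar> \<le> \<epsilon> / (u / v) + (u / v) * (1 - \<epsilon>)"
    by (rule abs_inner_re_le_of_concentrated_param[OF l2 unit disj conc])
  also have "\<dots> = u\<^sup>2 / (u / v) + (u / v) * v\<^sup>2"
    by (simp only: uv)
  also have "\<dots> = 2 * (u * v)"
    using uv(1,2) by (simp add: field_simps power2_eq_square)
  also have "u * v = sqrt (\<epsilon> * (1 - \<epsilon>))"
    by (simp add: u_def v_def real_sqrt_mult)
  finally show ?thesis .
qed

section \<open>The weighted overlap of the step inputs\<close>

definition step_input :: "nat \<Rightarrow> nat \<Rightarrow> bool" where
  "step_input i = (\<lambda>k. i \<le> k)"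

lemma step_input_ordered: "i < N \<Longrightarrow> step_input i \<in> ordered_inputs N"
  unfolding ordered_inputs_def step_input_def by auto

lemma ordered_search_step_input: "i < N \<Longrightarrow> ordered_search N (step_input i) = i"
  unfolding ordered_search_def step_input_def by (rule Least_equality) auto

lemma final_state_0: "final_state U 0 N x = U init_state"
  unfolding final_state_def by simp

lemma final_state_Suc: "final_state U (Suc t) N x = U (query_op N x (final_state U t N x))"
  unfolding final_state_def by simp

lemma final_state_l2: "is_unitary U \<Longrightarrow> final_state U t N x \<in> l2"
  by (induction t) (simp_all add: final_state_0 final_state_Suc unitary_l2 query_op_l2 init_state_l2)

lemma mass_final_state: "is_unitary U \<Longrightarrow> mass (final_state U t N x) UNIV = 1"
  by (induction t)
    (simp_all add: final_state_0 final_state_Suc unitary_mass query_op_l2 init_state_l2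
      mass_init_state mass_query_op final_state_l2)

lemma Re_cnj_mult_query_step_inputs:
  assumes "i < j" "j \<le> N"
  shows "Re (cnj (query_op N (step_input i) \<psi> (z, k)) * query_op N (step_input j) \<phi> (z, k))
    = (if i \<le> k \<and> k < j then - Re (cnj (\<psi> (z, k)) * \<phi> (z, k)) else Re (cnj (\<psi> (z, k)) * \<phi> (z, k)))"
  using assms unfolding query_op_def step_input_def by auto

lemma sum_query_overlap_change_eq:
  fixes \<psi> :: "nat \<Rightarrow> qstate"
  shows "(\<Sum>i<N. \<Sum>j\<in>{i<..<N}.
      (Re (cnj (query_op N (step_input i) (\<psi> i) (z, k)) * query_op N (step_input j) (\<psi> j) (z, k))
        - Re (cnj (\<psi> i (z, k)) * \<psi> j (z, k))) / (real j - real i))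
    = (\<Sum>i\<le>k. \<Sum>j\<in>{k<..<N}. - 2 * Re (cnj (\<psi> i (z, k)) * \<psi> j (z, k)) / (real j - real i))"
proof -
  have "(\<Sum>i<N. \<Sum>j\<in>{i<..<N}.
      (Re (cnj (query_op N (step_input i) (\<psi> i) (z, k)) * query_op N (step_input j) (\<psi> j) (z, k))
        - Re (cnj (\<psi> i (z, k)) * \<psi> j (z, k))) / (real j - real i))
    = (\<Sum>i<N. \<Sum>j\<in>{i<..<N}.
      if i \<le> k \<and> k < j then - 2 * Re (cnj (\<psi> i (z, k)) * \<psi> j (z, k)) / (real j - real i) else 0)"
    by (intro sum.cong refl) (subst Re_cnj_mult_query_step_inputs; auto)
  also have "\<dots> = (\<Sum>i\<le>k. \<Sum>j\<in>{k<..<N}. - 2 * Re (cnj (\<psi> i (z, k)) * \<psi> j (z, k)) / (real j - real i))"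
    by (rule sum_straddling_pairs)
  finally show ?thesis .
qed

lemma abs_query_overlap_change_le:
  fixes \<psi> :: "nat \<Rightarrow> qstate"
  shows "\<bar>\<Sum>i<N. \<Sum>j\<in>{i<..<N}.
      (Re (cnj (query_op N (step_input i) (\<psi> i) b) * query_op N (step_input j) (\<psi> j) b)
        - Re (cnj (\<psi> i b) * \<psi> j b)) / (real j - real i)\<bar>
    \<le> pi * (\<Sum>i<N. (cmod (\<psi> i b))\<^sup>2)"
proof -
  obtain z k where b: "b = (z, k)" by fastforce
  have "\<bar>\<Sum>i\<le>k. \<Sum>j\<in>{k<..<N}. - 2 * Re (cnj (\<psi> i b) * \<psi> j b) / (real j - real i)\<bar>
      \<le> (\<Sum>i\<le>k. \<Sum>j\<in>{k<..<N}. \<bar>- 2 * Re (cnj (\<psi> i b) * \<psi> j b) / (real j - real i)\<bar>)"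
    by (rule order_trans[OF sum_abs sum_mono[OF sum_abs]])
  also have "\<dots> \<le> (\<Sum>i\<le>k. \<Sum>j\<in>{k<..<N}. 2 * cmod (\<psi> i b) * cmod (\<psi> j b) / (real j - real i))"
  proof (intro sum_mono)
    fix i j assume "i \<in> {..k}" "j \<in> {k<..<N}"
    then have "real j - real i > 0" by auto
    moreover have "\<bar>- 2 * r / d\<bar> \<le> 2 * p / d" if "\<bar>r\<bar> \<le> p" "d > 0" for r p d :: real
      using that by (simp add: abs_mult divide_right_mono)
    ultimately show "\<bar>- 2 * Re (cnj (\<psi> i b) * \<psi> j b) / (real j - real i)\<bar>
        \<le> 2 * cmod (\<psi> i b) * cmod (\<psi> j b) / (real j - real i)"
      using abs_Re_cnj_mult_le by (simp only: mult.assoc)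
  qed
  also have "\<dots> \<le> pi * (\<Sum>i<N. (cmod (\<psi> i b))\<^sup>2)"
    by (rule hilbert_block_le)
  finally show ?thesis
    unfolding b sum_query_overlap_change_eq .
qed

definition weighted_overlap :: "(qstate \<Rightarrow> qstate) \<Rightarrow> nat \<Rightarrow> nat \<Rightarrow> real" where
  "weighted_overlap U N t =
    (\<Sum>i<N. \<Sum>j\<in>{i<..<N}.
      inner_re (final_state U t N (step_input i)) (final_state U t N (step_input j)) / (real j - real i))"

lemma weighted_overlap_0:
  assumes "is_unitary U"
  shows "weighted_overlap U N 0 = (\<Sum>i<N. \<Sum>j\<in>{i<..<N}. 1 / (real j - real i))"
  using assms unfolding weighted_overlap_def final_state_0 inner_re_self
  by (simp add: unitary_mass init_state_l2 mass_init_state)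

lemma abs_weighted_overlap_Suc_diff_le:
  assumes U: "is_unitary U"
  shows "\<bar>weighted_overlap U N (Suc t) - weighted_overlap U N t\<bar> \<le> pi * real N"
proof -
  define \<psi> where "\<psi> i = final_state U t N (step_input i)" for i
  define Q where "Q i = query_op N (step_input i) (\<psi> i)" for i
  have \<psi>: "\<psi> i \<in> l2" "mass (\<psi> i) UNIV = 1" for i
    unfolding \<psi>_def using U by (simp_all add: final_state_l2 mass_final_state)
  have Q: "Q i \<in> l2" for i
    unfolding Q_def using \<psi> by (simp add: query_op_l2)
  have "weighted_overlap U N (Suc t) = (\<Sum>i<N. \<Sum>j\<in>{i<..<N}. inner_re (Q i) (Q j) / (real j - real i))"
    unfolding weighted_overlap_def final_state_Suc using U Q
    by (simp add: unitary_inner_re Q_def \<psi>_def)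
  then have "weighted_overlap U N (Suc t) - weighted_overlap U N t
      = (\<Sum>i<N. \<Sum>j\<in>{i<..<N}. (inner_re (Q i) (Q j) - inner_re (\<psi> i) (\<psi> j)) / (real j - real i))"
    unfolding weighted_overlap_def \<psi>_def by (simp add: sum_subtractf diff_divide_distrib)
  then have "((\<lambda>b. \<Sum>i<N. \<Sum>j\<in>{i<..<N}.
      (Re (cnj (Q i b) * Q j b) - Re (cnj (\<psi> i b) * \<psi> j b)) / (real j - real i))
      has_sum weighted_overlap U N (Suc t) - weighted_overlap U N t) UNIV"
    using \<psi> Q by (simp only:)
      (intro has_sum_sum has_sum_divide_const has_sum_diff has_sum_inner_re finite_lessThan finite_greaterThanLessThan)
  moreover have "((\<lambda>b. pi * (\<Sum>i<N. (cmod (\<psi> i b))\<^sup>2)) has_sum pi * real N) UNIV"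
  proof -
    have "((\<lambda>b. \<Sum>i<N. (cmod (\<psi> i b))\<^sup>2) has_sum (\<Sum>i<N. mass (\<psi> i) UNIV)) UNIV"
      using \<psi>(1) by (intro has_sum_sum has_sum_mass finite_lessThan)
    then show ?thesis
      using \<psi>(2) by (simp add: has_sum_cmult_right)
  qed
  ultimately show ?thesis
    by (rule has_sum_abs_le) (unfold Q_def, rule abs_query_overlap_change_le)
qed

lemma weighted_overlap_decrease_le:
  assumes "is_unitary U"
  shows "weighted_overlap U N 0 - weighted_overlap U N T \<le> real T * (pi * real N)"
proof (induction T)
  case (Suc T)
  then show ?case
    using abs_weighted_overlap_Suc_diff_le[OF assms, of N T] by (simp add: algebra_simps)
qed simp

lemma weighted_overlap_final_le:
  assumes U: "is_unitary U" and \<epsilon>: "0 \<le> \<epsilon>" "\<epsilon> \<le> 1/2"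
    and correct: "\<And>i. i < N \<Longrightarrow> mass (final_state U T N (step_input i)) {b. out b = i} \<ge> 1 - \<epsilon>"
  shows "weighted_overlap U N T \<le> 2 * sqrt (\<epsilon> * (1 - \<epsilon>)) * (\<Sum>i<N. \<Sum>j\<in>{i<..<N}. 1 / (real j - real i))"
  unfolding weighted_overlap_def sum_distrib_left
proof (intro sum_mono)
  fix i j assume "i \<in> {..<N}" "j \<in> {i<..<N}"
  then have "\<bar>inner_re (final_state U T N (step_input i)) (final_state U T N (step_input j))\<bar>
      \<le> 2 * sqrt (\<epsilon> * (1 - \<epsilon>))"
    using U \<epsilon> correct
    by (intro abs_inner_re_le_of_concentrated[where A = "{b. out b = i}" and B = "{b. out b = j}"])
      (auto simp: final_state_l2 mass_final_state)
  with \<open>j \<in> {i<..<N}\<close> show "inner_re (final_state U T N (step_input i)) (final_state U T N (step_input j)) / (real j - real i)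
      \<le> 2 * sqrt (\<epsilon> * (1 - \<epsilon>)) * (1 / (real j - real i))"
    by (simp add: divide_right_mono)
qed

lemma query_lower_bound_of_step_inputs:
  assumes "N \<ge> 1" and U: "is_unitary U" and \<epsilon>: "0 \<le> \<epsilon>" "\<epsilon> \<le> 1/2"
    and correct: "\<And>i. i < N \<Longrightarrow> mass (final_state U T N (step_input i)) {b. out b = i} \<ge> 1 - \<epsilon>"
  shows "(1 - 2 * sqrt (\<epsilon> * (1 - \<epsilon>))) * ((\<Sum>k=1..N. 1 / real k) - 1) \<le> real T * pi"
proof -
  define c where "c = 2 * sqrt (\<epsilon> * (1 - \<epsilon>))"
  define H where "H = (\<Sum>k=1..N. 1 / real k)"
  have "real N * (H - 1) - real T * (pi * real N) \<le> weighted_overlap U N T"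
    using weighted_overlap_decrease_le[OF U] weighted_overlap_0[OF U]
    by (simp add: sum_inverse_differences H_def algebra_simps)
  also have "\<dots> \<le> c * (real N * (H - 1))"
    using weighted_overlap_final_le[OF U \<epsilon> correct]
    by (simp add: c_def H_def sum_inverse_differences algebra_simps)
  finally have "real N * ((1 - c) * (H - 1)) \<le> real N * (real T * pi)"
    by (simp add: algebra_simps)
  then show ?thesis
    unfolding c_def H_def by (rule mult_left_le_imp_le) (use assms(1) in simp)
qed

theorem theorem1:
  fixes N T :: nat and \<epsilon> :: real
    and U :: "qstate \<Rightarrow> qstate" and out :: "nat \<times> nat \<Rightarrow> nat"
  assumes "N \<ge> 1" and "0 \<le> \<epsilon>" and "\<epsilon> < 1/2"
    and "is_unitary U"
    and "\<forall>x\<in>ordered_inputs N. output_prob U out T N x (ordered_search N x) \<ge> 1 - \<epsilon>"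
  shows "real T \<ge> (1 - 2 * sqrt (\<epsilon> * (1 - \<epsilon>))) * (1 / pi) * ((\<Sum>k=1..N. 1 / real k) - 1)
    \<and> (\<epsilon> = 0 \<longrightarrow> real T > (1 / pi) * (ln (real N) - 1))"
proof -
  define H where "H = (\<Sum>k=1..N. 1 / real k)"
  have "mass (final_state U T N (step_input i)) {b. out b = i} \<ge> 1 - \<epsilon>" if "i < N" for i
    using assms(5) step_input_ordered[OF that]
    by (auto simp: output_prob_def mass_def ordered_search_step_input[OF that])
  then have "(1 - 2 * sqrt (\<epsilon> * (1 - \<epsilon>))) * (H - 1) \<le> real T * pi"
    unfolding H_def using assms(1-4) by (intro query_lower_bound_of_step_inputs) auto
  then have bound: "(1 - 2 * sqrt (\<epsilon> * (1 - \<epsilon>))) * (1 / pi) * (H - 1) \<le> real T"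
    by (simp add: field_simps)
  moreover have "real T > (1 / pi) * (ln (real N) - 1)" if "\<epsilon> = 0"
  proof -
    have "ln (real N) < ln (real N + 1)"
      using assms(1) by simp
    also have "\<dots> \<le> H"
      using harm_ge_ln[of N] by (simp add: H_def harm_def inverse_eq_divide)
    finally have "(1 / pi) * (ln (real N) - 1) < (1 / pi) * (H - 1)"
      by (simp add: divide_strict_right_mono)
    also have "\<dots> \<le> real T"
      using bound that by simp
    finally show ?thesis .
  qed
  ultimately show ?thesis
    unfolding H_def by blast
qed

end
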